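(* Let $N\geq 3$ be prime, $q\in\mathbb{C}$ with $q^N=1$, $q\neq 1$, and let $X\subset\mathbb{R}^d$ be a convex subspace. Let $\tau\in C^q_m(X)$ and $\sigma\in C^q_n(X)$ be singular $q$-chains with $mn>0$. Then $$\partial(\tau*\sigma)=\partial(\tau)*\sigma+q^{m+1}\,\tau*\partial(\sigma).$$
   Context: Singular $q$-chains: $C^q_n(X)$ is the free $\mathbb{Z}[q]$-module with basis the continuous maps $\sigma:\Delta^n\to X$, where $\Delta^n\subset\mathbb{R}^{n+1}$ is the convex hull of the standard basis $e_0,\dots,e_n$. The $j$-th face of an $n$-simplex is $\partial_j\sigma=\sigma\circ\lambda_j$, where $\lambda_j:\Delta^{n-1}\to\Delta^n$ is the affine map sending $e_0,\dots,e_{n-1}$ in order to $e_0,\dots,\widehat{e_j},\dots,e_n$; the border map is $\partial=\sum_{j=0}^n q^j\partial_j$ on $C^q_n(X)$ for $n\geq1$, extended linearly. Convex product: for singular simplices $\tau:\Delta^m\to X$, $\sigma:\Delta^n\to X$, write points of $\Delta^{m+n+1}$ as $(\alpha;\beta)=(\alpha_0,\dots,\alpha_m;\beta_0,\dots,\beta_n)$, $|\alpha|=\sum\alpha_i$, $|\beta|=\sum\beta_j$; then $\tau*\sigma:\Delta^{m+n+1}\to X$ is $\tau(\alpha)$ if $|\beta|=0$, $\sigma(\beta)$ if $|\alpha|=0$, and $|\alpha|\,\tau(\alpha/|\alpha|)+|\beta|\,\sigma(\beta/|\beta|)$ otherwise. This is extended to a bilinear map $C^q_m(X)\times C^q_n(X)\to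 C^q_{m+n+1}(X)$. *)

theory Defs
  imports "HOL-Homology.Homology" "HOL-Library.Poly_Mapping" "HOL-Computational_Algebra.Primes"
begin

text \<open>Points of the standard n-simplex are functions nat => real (coordinates 0..n),
  singular simplices are as in HOL-Homology (continuous, extensional on the simplex).\<close>

type_synonym 'a qchain = "((nat \<Rightarrow> real) \<Rightarrow> 'a) \<Rightarrow>\<^sub>0 complex"

definition Zq :: "complex \<Rightarrow> complex set" where
  "Zq q = {z. \<exists>(f::nat \<Rightarrow> int) k. z = (\<Sum>i<k. of_int (f i) * q ^ i)}"

definition qchains :: "complex \<Rightarrow> nat \<Rightarrow> 'a topology \<Rightarrow> 'a qchain set" where
  "qchains q n X = {c. (\<forall>s \<in> Poly_Mapping.keys c. singular_simplex n X s)
                      \<and> (\<forall>s. Poly_Mapping.lookup c s \<in> Zq q)}"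

definition qborder :: "complex \<Rightarrow> nat \<Rightarrow> 'a qchain \<Rightarrow> 'a qchain" where
  "qborder q n c = (\<Sum>s\<in>Poly_Mapping.keys c. \<Sum>j\<le>n.
      Poly_Mapping.single (singular_face n j s) (q ^ j * Poly_Mapping.lookup c s))"

definition convex_join :: "nat \<Rightarrow> nat \<Rightarrow> ((nat \<Rightarrow> real) \<Rightarrow> 'a::real_vector)
      \<Rightarrow> ((nat \<Rightarrow> real) \<Rightarrow> 'a) \<Rightarrow> (nat \<Rightarrow> real) \<Rightarrow> 'a" where
  "convex_join m n t s = restrict (\<lambda>x.
      let alpha = (\<lambda>i. if i \<le> m then x i else 0);
          beta = (\<lambda>j. if j \<le> n then x (m + 1 + j) else 0);
          a = (\<Sum>i\<le>m. x i);
          b = (\<Sum>j\<le>n. x (m + 1 + j))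
      in if b = 0 then t alpha
         else if a = 0 then s beta
         else a *\<^sub>R t (\<lambda>i. alpha i / a) + b *\<^sub>R s (\<lambda>j. beta j / b))
    (standard_simplex (m + n + 1))"

definition qjoin :: "nat \<Rightarrow> nat \<Rightarrow> ('a::real_vector) qchain \<Rightarrow> 'a qchain \<Rightarrow> 'a qchain" where
  "qjoin m n c d = (\<Sum>t\<in>Poly_Mapping.keys c. \<Sum>s\<in>Poly_Mapping.keys d.
      Poly_Mapping.single (convex_join m n t s) (Poly_Mapping.lookup c t * Poly_Mapping.lookup d s))"

end

theory Submission
  imports Defs
begin

text \<open>Deleting a vertex of the join \<open>\<tau> * \<sigma>\<close> only rescales the barycentric coordinates on
  one side: for \<open>j \<le> m\<close> the \<open>j\<close>-th face of \<open>\<tau> * \<sigma>\<close> is \<open>\<partial>\<^sub>j \<tau> * \<sigma>\<close>, and for \<open>k \<le> n\<close> its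
  \<open>(m + 1 + k)\<close>-th face is \<open>\<tau> * \<partial>\<^sub>k \<sigma>\<close>. Splitting the border sum of \<open>\<tau> * \<sigma>\<close> at index \<open>m\<close>
  therefore gives the two terms, the second with the extra weight \<open>q ^ (m + 1)\<close>, and linearity of
  the border together with bilinearity of the join extends this from simplices to chains.
  The identity holds for every \<open>q\<close> and all chains.\<close>

lemma sum_atMost_add_Suc:
  fixes f :: "nat \<Rightarrow> 'a::comm_monoid_add"
  shows "sum f {..a + b + 1} = sum f {..a} + (\<Sum>k\<le>b. f (a + 1 + k))"
  by (induction b) (simp_all add: add.assoc)

lemma sum_simplical_face:
  assumes "k \<le> Suc p"
  shows "(\<Sum>i\<le>Suc p. simplical_face k x i) = (\<Sum>i\<le>p. x i)"
  using assms
proof (induction p arbitrary: k)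
  case 0
  then show ?case by (auto simp: simplical_face_def le_Suc_eq)
next
  case (Suc p)
  show ?case
  proof (cases "k \<le> Suc p")
    case True
    then show ?thesis using Suc.IH[OF True] by (simp add: simplical_face_def)
  next
    case False
    then have "k = Suc (Suc p)" using Suc.prems by simp
    then show ?thesis by (simp add: simplical_face_def)
  qed
qed

lemma simplical_face_divide:
  "simplical_face k (\<lambda>i. x i / (c::real)) = (\<lambda>i. simplical_face k x i / c)"
  by (simp add: simplical_face_def fun_eq_iff)

lemma normalized_in_standard_simplex:
  assumes "\<And>i. 0 \<le> x i" and "(\<Sum>i\<le>p. x i) = c" and "c > 0"
  shows "(\<lambda>i. (if i \<le> p then x i else 0) / c) \<in> standard_simplex p"
proof -
  have "x i \<le> c" if "i \<le> p" for i
    using member_le_sum[of i "{..p}" x] assms that by auto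
  moreover have "(\<Sum>i\<le>p. (if i \<le> p then x i else 0) / c) = 1"
    using assms by (simp flip: sum_divide_distrib)
  ultimately show ?thesis
    using assms by (auto simp: standard_simplex_def divide_le_eq_1)
qed

text \<open>Only positive normalizing constants need to be compared: when one half of the
  coordinates has total weight \<open>0\<close>, the other half has weight \<open>1\<close>.\<close>

lemma convex_join_cong:
  fixes t s t' s' :: "(nat \<Rightarrow> real) \<Rightarrow> 'a::real_vector"
  assumes x: "x \<in> standard_simplex (m + n + 1)" and y: "y \<in> standard_simplex (m' + n' + 1)"
    and head_sum: "(\<Sum>i\<le>m. x i) = (\<Sum>i\<le>m'. y i)"
    and head: "\<And>c. c = (\<Sum>i\<le>m. x i) \<Longrightarrow> c > 0 \<Longrightarrow>
      t (\<lambda>i. (if i \<le> m then x i else 0) / c) = t' (\<lambda>i. (if i \<le> m' then y i else 0) / c)"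
    and tail: "\<And>c. c = (\<Sum>j\<le>n. x (m + 1 + j)) \<Longrightarrow> c > 0 \<Longrightarrow>
      s (\<lambda>j. (if j \<le> n then x (m + 1 + j) else 0) / c) = s' (\<lambda>j. (if j \<le> n' then y (m' + 1 + j) else 0) / c)"
  shows "convex_join m n t s x = convex_join m' n' t' s' y"
proof -
  define a where "a = (\<Sum>i\<le>m. x i)"
  define b where "b = (\<Sum>j\<le>n. x (m + 1 + j))"
  have "a + b = 1" "(\<Sum>i\<le>m'. y i) + (\<Sum>j\<le>n'. y (m' + 1 + j)) = 1"
    using x y unfolding a_def b_def standard_simplex_def sum_atMost_add_Suc by blast+
  then have tail_sum: "(\<Sum>j\<le>n'. y (m' + 1 + j)) = b"
    using head_sum by (simp add: a_def)
  have "a \<ge> 0" "b \<ge> 0"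
    using x by (auto simp: a_def b_def standard_simplex_def intro: sum_nonneg)
  then consider "b = 0" "a = 1" | "a = 0" "b = 1" | "a > 0" "b > 0"
    using \<open>a + b = 1\<close> by fastforce
  then show ?thesis
  proof cases
    case 1
    then show ?thesis using x y head[of 1] head_sum tail_sum
      by (simp add: convex_join_def Let_def a_def b_def)
  next
    case 2
    then show ?thesis using x y tail[of 1] head_sum tail_sum
      by (simp add: convex_join_def Let_def a_def b_def)
  next
    case 3
    then show ?thesis using x y head[of a] tail[of b] head_sum tail_sum
      by (simp add: convex_join_def Let_def a_def b_def)
  qed
qed

lemma singular_face_convex_join_left:
  assumes "j \<le> Suc m"
  shows "singular_face (Suc m + n + 1) j (convex_join (Suc m) n t s)
       = convex_join m n (singular_face (Suc m) j t) s"
proof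
  fix x
  show "singular_face (Suc m + n + 1) j (convex_join (Suc m) n t s) x
      = convex_join m n (singular_face (Suc m) j t) s x"
  proof (cases "x \<in> standard_simplex (m + n + 1)")
    case False
    then show ?thesis by (simp add: singular_face_def convex_join_def)
  next
    case x: True
    define y where "y = simplical_face j x"
    have y: "y \<in> standard_simplex (Suc m + n + 1)"
      using simplical_face_in_standard_simplex[of "Suc m + n + 1" j x] x assms by (simp add: y_def)
    have head: "(\<lambda>i. if i \<le> Suc m then y i else 0) = simplical_face j (\<lambda>i. if i \<le> m then x i else 0)"
      using assms by (auto simp: y_def simplical_face_def fun_eq_iff)
    have "(\<Sum>i\<le>Suc m. y i) = (\<Sum>i\<le>Suc m. simplical_face j (\<lambda>i. if i \<le> m then x i else 0) i)"
      by (rule sum.cong) (simp_all flip: head)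
    also have "\<dots> = (\<Sum>i\<le>m. x i)"
      using sum_simplical_face[of j m "\<lambda>i. if i \<le> m then x i else 0"] assms by simp
    finally have head_sum: "(\<Sum>i\<le>Suc m. y i) = (\<Sum>i\<le>m. x i)" .
    have "convex_join (Suc m) n t s y = convex_join m n (singular_face (Suc m) j t) s x"
    proof (rule convex_join_cong[OF y x head_sum])
      fix c assume "c = (\<Sum>i\<le>Suc m. y i)" "c > 0"
      then have "(\<lambda>i. (if i \<le> m then x i else 0) / c) \<in> standard_simplex m"
        using x head_sum by (intro normalized_in_standard_simplex) (auto simp: standard_simplex_def)
      then show "t (\<lambda>i. (if i \<le> Suc m then y i else 0) / c)
          = singular_face (Suc m) j t (\<lambda>i. (if i \<le> m then x i else 0) / c)"
        by (simp add: singular_face_def simplical_face_divide flip: head)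
    next
      have "y (Suc m + 1 + k) = x (m + 1 + k)" for k
        using assms by (simp add: y_def simplical_face_def)
      then show "s (\<lambda>k. (if k \<le> n then y (Suc m + 1 + k) else 0) / c)
          = s (\<lambda>k. (if k \<le> n then x (m + 1 + k) else 0) / c)" for c
        by (simp only:)
    qed
    then show ?thesis
      using x by (simp add: singular_face_def convex_join_def y_def)
  qed
qed

lemma singular_face_convex_join_right:
  assumes "k \<le> Suc n"
  shows "singular_face (m + Suc n + 1) (m + 1 + k) (convex_join m (Suc n) t s)
       = convex_join m n t (singular_face (Suc n) k s)"
proof
  fix x
  show "singular_face (m + Suc n + 1) (m + 1 + k) (convex_join m (Suc n) t s) x
      = convex_join m n t (singular_face (Suc n) k s) x"
  proof (cases "x \<in> standard_simplex (m + n + 1)")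
    case False
    then show ?thesis by (simp add: singular_face_def convex_join_def)
  next
    case x: True
    define y where "y = simplical_face (m + 1 + k) x"
    have y: "y \<in> standard_simplex (m + Suc n + 1)"
      using simplical_face_in_standard_simplex[of "m + Suc n + 1" "m + 1 + k" x] x assms
      by (simp add: y_def)
    have head: "y i = x i" if "i \<le> m" for i
      using that by (simp add: y_def simplical_face_def)
    have tail: "(\<lambda>j. if j \<le> Suc n then y (m + 1 + j) else 0)
        = simplical_face k (\<lambda>j. if j \<le> n then x (m + 1 + j) else 0)"
      using assms by (auto simp: y_def simplical_face_def fun_eq_iff)
    have "(\<Sum>j\<le>Suc n. y (m + 1 + j))
        = (\<Sum>j\<le>Suc n. simplical_face k (\<lambda>j. if j \<le> n then x (m + 1 + j) else 0) j)"
      by (rule sum.cong) (simp_all flip: tail)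
    also have "\<dots> = (\<Sum>j\<le>n. x (m + 1 + j))"
      using sum_simplical_face[of k n "\<lambda>j. if j \<le> n then x (m + 1 + j) else 0"] assms by simp
    finally have tail_sum: "(\<Sum>j\<le>Suc n. y (m + 1 + j)) = (\<Sum>j\<le>n. x (m + 1 + j))" .
    have "convex_join m (Suc n) t s y = convex_join m n t (singular_face (Suc n) k s) x"
    proof (rule convex_join_cong[OF y x])
      show "(\<Sum>i\<le>m. y i) = (\<Sum>i\<le>m. x i)"
        by (simp add: head)
      have "(\<lambda>i. (if i \<le> m then y i else 0) / c) = (\<lambda>i. (if i \<le> m then x i else 0) / c)" for c
        by (auto simp: head fun_eq_iff)
      then show "t (\<lambda>i. (if i \<le> m then y i else 0) / c) = t (\<lambda>i. (if i \<le> m then x i else 0) / c)" for c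
        by (simp only:)
    next
      fix c assume "c = (\<Sum>j\<le>Suc n. y (m + 1 + j))" "c > 0"
      then have "(\<lambda>j. (if j \<le> n then x (m + 1 + j) else 0) / c) \<in> standard_simplex n"
        using x tail_sum by (intro normalized_in_standard_simplex) (auto simp: standard_simplex_def)
      then show "s (\<lambda>j. (if j \<le> Suc n then y (m + 1 + j) else 0) / c)
          = singular_face (Suc n) k s (\<lambda>j. (if j \<le> n then x (m + 1 + j) else 0) / c)"
        by (simp add: singular_face_def simplical_face_divide flip: tail)
    qed
    then show ?thesis
      using x by (simp add: singular_face_def convex_join_def y_def)
  qed
qed

lemma sum_keys_add:
  fixes F :: "'k \<Rightarrow> 'v::monoid_add \<Rightarrow> 'p::comm_monoid_add"
  assumes add: "\<And>k a b. F k (a + b) = F k a + F k b" and zero: "\<And>k. F k 0 = 0"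
  shows "(\<Sum>k\<in>Poly_Mapping.keys (c + d). F k (Poly_Mapping.lookup (c + d) k))
       = (\<Sum>k\<in>Poly_Mapping.keys c. F k (Poly_Mapping.lookup c k))
       + (\<Sum>k\<in>Poly_Mapping.keys d. F k (Poly_Mapping.lookup d k))"
proof -
  have extend: "(\<Sum>k\<in>Poly_Mapping.keys e. F k (Poly_Mapping.lookup e k))
      = (\<Sum>k\<in>Poly_Mapping.keys c \<union> Poly_Mapping.keys d. F k (Poly_Mapping.lookup e k))"
    if "Poly_Mapping.keys e \<subseteq> Poly_Mapping.keys c \<union> Poly_Mapping.keys d" for e
    using that zero by (intro sum.mono_neutral_left) (auto simp: in_keys_iff)
  have "(\<Sum>k\<in>Poly_Mapping.keys (c + d). F k (Poly_Mapping.lookup (c + d) k))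
      = (\<Sum>k\<in>Poly_Mapping.keys c \<union> Poly_Mapping.keys d. F k (Poly_Mapping.lookup (c + d) k))"
    using keys_add[of c d] by (rule extend)
  also have "\<dots> = (\<Sum>k\<in>Poly_Mapping.keys c \<union> Poly_Mapping.keys d. F k (Poly_Mapping.lookup c k))
      + (\<Sum>k\<in>Poly_Mapping.keys c \<union> Poly_Mapping.keys d. F k (Poly_Mapping.lookup d k))"
    by (simp add: lookup_add add sum.distrib)
  finally show ?thesis
    by (simp add: extend)
qed

lemma sum_keys_sum:
  fixes F :: "'k \<Rightarrow> 'v::comm_monoid_add \<Rightarrow> 'p::comm_monoid_add"
  assumes add: "\<And>k a b. F k (a + b) = F k a + F k b" and zero: "\<And>k. F k 0 = 0"
  shows "(\<Sum>k\<in>Poly_Mapping.keys (\<Sum>i\<in>I. c i). F k (Poly_Mapping.lookup (\<Sum>i\<in>I. c i) k))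
       = (\<Sum>i\<in>I. \<Sum>k\<in>Poly_Mapping.keys (c i). F k (Poly_Mapping.lookup (c i) k))"
proof (induction I rule: infinite_finite_induct)
  case (insert i I)
  then show ?case
    using sum_keys_add[of F, OF add zero, where c = "c i" and d = "sum c I"] by simp
qed simp_all

lemma qborder_sum: "qborder q n (\<Sum>i\<in>I. c i) = (\<Sum>i\<in>I. qborder q n (c i))"
  unfolding qborder_def
  by (rule sum_keys_sum) (simp_all add: distrib_left single_add sum.distrib)

lemma qborder_single:
  "qborder q n (Poly_Mapping.single s a) = (\<Sum>j\<le>n. Poly_Mapping.single (singular_face n j s) (q ^ j * a))"
  by (simp add: qborder_def)

lemma qjoin_sum_left: "qjoin m n (\<Sum>i\<in>I. c i) d = (\<Sum>i\<in>I. qjoin m n (c i) d)"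
  unfolding qjoin_def
  by (rule sum_keys_sum) (simp_all add: distrib_right single_add sum.distrib)

lemma qjoin_single_left:
  "qjoin m n (Poly_Mapping.single t a) d
     = (\<Sum>s\<in>Poly_Mapping.keys d. Poly_Mapping.single (convex_join m n t s) (a * Poly_Mapping.lookup d s))"
  by (simp add: qjoin_def)

lemma qjoin_swap:
  "qjoin m n c d = (\<Sum>s\<in>Poly_Mapping.keys d. \<Sum>t\<in>Poly_Mapping.keys c.
      Poly_Mapping.single (convex_join m n t s) (Poly_Mapping.lookup c t * Poly_Mapping.lookup d s))"
  unfolding qjoin_def by (rule sum.swap)

lemma qjoin_sum_right: "qjoin m n c (\<Sum>i\<in>I. d i) = (\<Sum>i\<in>I. qjoin m n c (d i))"
  unfolding qjoin_swap
  by (rule sum_keys_sum) (simp_all add: distrib_left single_add sum.distrib)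

lemma qjoin_single_right:
  "qjoin m n c (Poly_Mapping.single s b)
     = (\<Sum>t\<in>Poly_Mapping.keys c. Poly_Mapping.single (convex_join m n t s) (Poly_Mapping.lookup c t * b))"
  by (simp add: qjoin_swap)

lemma lookup_map_mult:
  "Poly_Mapping.lookup (Poly_Mapping.map (\<lambda>z. a * z) p) k = (a::'b::semiring_0) * Poly_Mapping.lookup p k"
  by (simp add: Poly_Mapping.map.rep_eq when_def)

lemma map_mult_sum:
  "Poly_Mapping.map (\<lambda>z. a * z) (\<Sum>i\<in>I. p i) = (\<Sum>i\<in>I. Poly_Mapping.map (\<lambda>z. (a::'b::semiring_0) * z) (p i))"
  by (rule poly_mapping_eqI) (simp add: lookup_map_mult lookup_sum sum_distrib_left)

lemma qborder_single_convex_join: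
  assumes "0 < m" "0 < n"
  shows "qborder q (m + n + 1) (Poly_Mapping.single (convex_join m n t s) a)
       = (\<Sum>j\<le>m. Poly_Mapping.single (convex_join (m - 1) n (singular_face m j t) s) (q ^ j * a))
         + Poly_Mapping.map (\<lambda>z. q ^ (m + 1) * z)
             (\<Sum>k\<le>n. Poly_Mapping.single (convex_join m (n - 1) t (singular_face n k s)) (q ^ k * a))"
proof -
  obtain m' n' where m: "m = Suc m'" and n: "n = Suc n'"
    using assms by (meson gr0_implies_Suc)
  have left: "singular_face (m + n + 1) j (convex_join m n t s) = convex_join (m - 1) n (singular_face m j t) s"
    if "j \<le> m" for j
    using singular_face_convex_join_left[of j m' n t s] that by (simp add: m)
  have right: "singular_face (m + n + 1) (m + 1 + k) (convex_join m n t s)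
      = convex_join m (n - 1) t (singular_face n k s)" if "k \<le> n" for k
    using singular_face_convex_join_right[of k n' m t s] that by (simp add: n)
  have "qborder q (m + n + 1) (Poly_Mapping.single (convex_join m n t s) a)
      = (\<Sum>j\<le>m. Poly_Mapping.single (singular_face (m + n + 1) j (convex_join m n t s)) (q ^ j * a))
      + (\<Sum>k\<le>n. Poly_Mapping.single (singular_face (m + n + 1) (m + 1 + k) (convex_join m n t s))
                                   (q ^ (m + 1 + k) * a))"
    by (simp only: qborder_single sum_atMost_add_Suc)
  also have "\<dots> = (\<Sum>j\<le>m. Poly_Mapping.single (convex_join (m - 1) n (singular_face m j t) s) (q ^ j * a))
      + (\<Sum>k\<le>n. Poly_Mapping.single (convex_join m (n - 1) t (singular_face n k s)) (q ^ (m + 1) * (q ^ k * a)))"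
    by (intro arg_cong2[where f = "(+)"] sum.cong refl)
       (simp_all only: atMost_iff left right power_add mult.assoc)
  finally show ?thesis
    by (simp add: map_mult_sum)
qed

lemma qborder_qjoin:
  assumes "0 < m" "0 < n"
  shows "qborder q (m + n + 1) (qjoin m n c d)
       = qjoin (m - 1) n (qborder q m c) d
         + Poly_Mapping.map (\<lambda>z. q ^ (m + 1) * z) (qjoin m (n - 1) c (qborder q n d))"
proof -
  let ?c = "Poly_Mapping.lookup c" and ?d = "Poly_Mapping.lookup d"
  have left: "qjoin (m - 1) n (qborder q m c) d
      = (\<Sum>t\<in>Poly_Mapping.keys c. \<Sum>s\<in>Poly_Mapping.keys d. \<Sum>j\<le>m.
           Poly_Mapping.single (convex_join (m - 1) n (singular_face m j t) s) (q ^ j * (?c t * ?d s)))"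
    unfolding qborder_def qjoin_sum_left qjoin_single_left
    by (simp add: sum.swap[of _ "{..m}"] mult.assoc)
  have right: "qjoin m (n - 1) c (qborder q n d)
      = (\<Sum>t\<in>Poly_Mapping.keys c. \<Sum>s\<in>Poly_Mapping.keys d. \<Sum>k\<le>n.
           Poly_Mapping.single (convex_join m (n - 1) t (singular_face n k s)) (q ^ k * (?c t * ?d s)))"
    unfolding qborder_def qjoin_sum_right qjoin_single_right
    by (simp add: sum.swap[where A = "{..n}" and B = "Poly_Mapping.keys c"]
        sum.swap[where A = "Poly_Mapping.keys d" and B = "Poly_Mapping.keys c"] mult.left_commute)
  show ?thesis
    unfolding left right qjoin_def[of m n] qborder_sum qborder_single_convex_join[OF assms]
    by (simp add: sum.distrib map_mult_sum)
qed

theorem lemma4p2: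
  fixes N :: nat and q :: complex and X :: "(real ^ 'd) set"
    and tau sigma :: "(real ^ 'd) qchain" and m n :: nat
  assumes "prime N" and "N \<ge> 3"
    and "q ^ N = 1" and "q \<noteq> 1"
    and "convex X"
    and "tau \<in> qchains q m (top_of_set X)"
    and "sigma \<in> qchains q n (top_of_set X)"
    and "m * n > 0"
  shows "qborder q (m + n + 1) (qjoin m n tau sigma)
       = qjoin (m - 1) n (qborder q m tau) sigma
         + Poly_Mapping.map (\<lambda>z. q ^ (m + 1) * z) (qjoin m (n - 1) tau (qborder q n sigma))"
proof -
  have "0 < m" "0 < n"
    using \<open>m * n > 0\<close> by simp_all
  then show ?thesis
    by (rule qborder_qjoin)
qed

end
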